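(* Let $\varepsilon>0$ be a constant. Asymptotically almost all fully symmetric $n^d\times n^d$ matrices have PT-rank at least $(\tfrac{1}{2^{d+1}}-\varepsilon)n^d$: over a finite field the fraction of fully symmetric $n^d\times n^d$ matrices with smaller PT-rank tends to $0$ as $n\to\infty$, and over an infinite field the fully symmetric matrices of smaller PT-rank lie in a Zariski-closed subset of dimension strictly less than that of the space of fully symmetric matrices (for large $n$).
   Context: Rows and columns of $n^d\times n^d$ matrices are indexed by $[n]^d$. For $k\in[d]$, $M^{\top_k}$ swaps the $k$-th row index with the $k$-th column index: $M^{\top_k}_{(i_1,\dots,i_d),(j_1,\dots,j_d)}=M_{(\dots,i_{k-1},j_k,i_{k+1},\dots),(\dots,j_{k-1},i_k,j_{k+1},\dots)}$; $M^{\top_\kappa}$ composes these over $k\in\kappa\subseteq[d]$. $M$ is fully symmetric if $M^{\top_k}=M$ for all $k\in[d]$. $M$ is PT-basic if $\mathrm{rank}(M^{\top_\kappa})=1$ for some $\kappa$; $\mathrm{PT\text{-}rank}(M)$ is the least number of PT-basic matrices summing to $M$. *)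

theory Defs
  imports Complex_Main
begin

text \<open>Matrices of size n^d x n^d over a field, rows and columns indexed by [n]^d,
  represented as functions on index lists (length d, entries < n), zero outside.\<close>

definition idx :: "nat \<Rightarrow> nat \<Rightarrow> nat list set" where
  "idx n d = {xs. length xs = d \<and> set xs \<subseteq> {..<n}}"

definition swap_idx :: "nat set \<Rightarrow> nat list \<Rightarrow> nat list \<Rightarrow> nat list" where
  "swap_idx \<kappa> i j = map (\<lambda>p. if p \<in> \<kappa> then j ! p else i ! p) [0..<length i]"

definition ptrans :: "nat \<Rightarrow> nat \<Rightarrow> nat set \<Rightarrow> (nat list \<Rightarrow> nat list \<Rightarrow> 'a::zero)
    \<Rightarrow> (nat list \<Rightarrow> nat list \<Rightarrow> 'a)" where
  "ptrans n d \<kappa> M i j =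
     (if i \<in> idx n d \<and> j \<in> idx n d then M (swap_idx \<kappa> i j) (swap_idx \<kappa> j i) else 0)"

definition is_mat :: "nat \<Rightarrow> nat \<Rightarrow> (nat list \<Rightarrow> nat list \<Rightarrow> 'a::zero) \<Rightarrow> bool" where
  "is_mat n d M \<longleftrightarrow> (\<forall>i j. (i \<notin> idx n d \<or> j \<notin> idx n d) \<longrightarrow> M i j = 0)"

definition mat_rank :: "nat list set \<Rightarrow> (nat list \<Rightarrow> nat list \<Rightarrow> 'a::field) \<Rightarrow> nat" where
  "mat_rank I M = (LEAST r. \<exists>u v :: nat \<Rightarrow> nat list \<Rightarrow> 'a.
      \<forall>i\<in>I. \<forall>j\<in>I. M i j = (\<Sum>t<r. u t i * v t j))"

definition fully_symmetric :: "nat \<Rightarrow> nat \<Rightarrow> (nat list \<Rightarrow> nat list \<Rightarrow> 'a::zero) \<Rightarrow> bool" where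
  "fully_symmetric n d M \<longleftrightarrow> is_mat n d M \<and> (\<forall>k<d. ptrans n d {k} M = M)"

definition FS :: "nat \<Rightarrow> nat \<Rightarrow> (nat list \<Rightarrow> nat list \<Rightarrow> 'a::zero) set" where
  "FS n d = {M. fully_symmetric n d M}"

definition PT_basic :: "nat \<Rightarrow> nat \<Rightarrow> (nat list \<Rightarrow> nat list \<Rightarrow> 'a::field) \<Rightarrow> bool" where
  "PT_basic n d M \<longleftrightarrow> (\<exists>\<kappa>\<subseteq>{..<d}. mat_rank (idx n d) (ptrans n d \<kappa> M) = 1)"

definition PT_rank :: "nat \<Rightarrow> nat \<Rightarrow> (nat list \<Rightarrow> nat list \<Rightarrow> 'a::field) \<Rightarrow> nat" where
  "PT_rank n d M = (LEAST r. \<exists>B :: nat \<Rightarrow> nat list \<Rightarrow> nat list \<Rightarrow> 'a.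
      (\<forall>t<r. is_mat n d (B t) \<and> PT_basic n d (B t)) \<and>
      (\<forall>i\<in>idx n d. \<forall>j\<in>idx n d. M i j = (\<Sum>t<r. B t i j)))"

inductive_set poly_fun :: "((nat list \<Rightarrow> nat list \<Rightarrow> 'a::field) \<Rightarrow> 'a) set" where
  pf_const: "(\<lambda>M. c) \<in> poly_fun"
| pf_var: "(\<lambda>M. M i j) \<in> poly_fun"
| pf_add: "p \<in> poly_fun \<Longrightarrow> q \<in> poly_fun \<Longrightarrow> (\<lambda>M. p M + q M) \<in> poly_fun"
| pf_mult: "p \<in> poly_fun \<Longrightarrow> q \<in> poly_fun \<Longrightarrow> (\<lambda>M. p M * q M) \<in> poly_fun"

end

theory Submission
  imports Defs "HOL-Library.Function_Algebras" "HOL-Library.FuncSet"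
    "HOL-Computational_Algebra.Polynomial"
begin

text \<open>A sum of \<open>R\<close> PT-basic matrices is determined by the partial transposes
  \<open>\<kappa>\<^sub>1, ..., \<kappa>\<^sub>R\<close> of its terms and by the \<open>2 R n^d\<close> entries of the row and column
  factors of the rank-one matrices behind them. A fully symmetric matrix, in contrast, takes
  arbitrary values at the index pairs \<open>(i, j)\<close> with \<open>i\<^sub>k \<le> j\<^sub>k\<close> for all \<open>k\<close>, and there are
  at least \<open>n^(2d) / 2^d\<close> of those. Below the threshold \<open>(1/2^(d+1) - \<epsilon>) n^d\<close> the factor
  entries are fewer than these free entries, with a margin of \<open>2 \<epsilon> n^(2d)\<close>.

  Over a field with \<open>q\<close> elements this is a count: at most \<open>2^(dR) q^(2Rn^d)\<close> matrices of
  PT-rank at most \<open>R\<close> against at least \<open>q^(n^(2d)/2^d)\<close> fully symmetric ones, a ratio below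
  \<open>2^-n\<close> for large \<open>n\<close>. Over an infinite field, the free entries of a matrix of PT-rank at
  most \<open>R\<close> are, for each of the finitely many choices of the \<open>\<kappa>\<^sub>t\<close>, polynomials in fewer
  variables. Comparing the number of monomials of bounded degree in the free entries with the
  dimension of the space their pullbacks lie in gives a linear relation among these monomials,
  i.e. a polynomial in the free entries vanishing on all such matrices; it is nonzero on some
  fully symmetric matrix because the free entries can be prescribed arbitrarily and distinct
  monomials are linearly independent functions over an infinite field.\<close>

section \<open>Partial transposes and PT-basic matrices\<close>

lemma idx_eq_lists: "idx n d = {xs. set xs \<subseteq> {..<n} \<and> length xs = d}"
  by (auto simp: idx_def)

lemma finite_idx: "finite (idx n d)"
  by (simp add: idx_eq_lists finite_lists_length_eq)

lemma card_idx: "card (idx n d) = n ^ d"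
  by (simp add: idx_eq_lists card_lists_length_eq)

lemma idx_length: "i \<in> idx n d \<Longrightarrow> length i = d"
  by (simp add: idx_def)

lemma length_swap_idx [simp]: "length (swap_idx \<kappa> i j) = length i"
  by (simp add: swap_idx_def)

lemma nth_swap_idx [simp]:
  "p < length i \<Longrightarrow> swap_idx \<kappa> i j ! p = (if p \<in> \<kappa> then j ! p else i ! p)"
  by (simp add: swap_idx_def)

lemma swap_idx_empty [simp]: "swap_idx {} i j = i"
  by (rule nth_equalityI) auto

lemma swap_idx_in_idx: "i \<in> idx n d \<Longrightarrow> j \<in> idx n d \<Longrightarrow> swap_idx \<kappa> i j \<in> idx n d"
  unfolding idx_def by (auto simp: in_set_conv_nth) (metis lessThan_iff nth_mem subset_iff)+

lemma swap_idx_swap_idx: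
  "length i = length j \<Longrightarrow> swap_idx \<kappa> (swap_idx \<kappa> i j) (swap_idx \<kappa> j i) = i"
  by (rule nth_equalityI) auto

lemma ptrans_at_swap_idx:
  assumes "i \<in> idx n d" "j \<in> idx n d"
  shows "ptrans n d \<kappa> M (swap_idx \<kappa> i j) (swap_idx \<kappa> j i) = M i j"
  using assms swap_idx_in_idx[OF assms] swap_idx_in_idx[OF assms(2,1)]
  by (simp add: ptrans_def idx_length swap_idx_swap_idx)

lemma bij_betw_lessThan_card:
  assumes "finite Z"
  obtains h :: "nat \<Rightarrow> 'z" where "bij_betw h {..<card Z} Z"
  using ex_bij_betw_nat_finite[OF assms] by (metis lessThan_atLeast0)

lemma mat_rank_cong:
  assumes "\<And>i j. i \<in> I \<Longrightarrow> j \<in> I \<Longrightarrow> M i j = M' i j"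
  shows "mat_rank I M = mat_rank I M'"
  unfolding mat_rank_def using assms by simp

lemma ex_outer_product_sum:
  fixes M :: "nat list \<Rightarrow> nat list \<Rightarrow> 'a::field"
  assumes "finite I"
  shows "\<exists>(r::nat) u v. \<forall>i\<in>I. \<forall>j\<in>I. M i j = (\<Sum>t<r. u t i * v t j)"
proof -
  obtain h where h: "bij_betw h {..<card I} I"
    using bij_betw_lessThan_card[OF assms] .
  have dec: "M i j = (\<Sum>t<card I. M i (h t) * (if j = h t then 1 else 0))" if "j \<in> I" for i j
  proof -
    have "(\<Sum>t<card I. M i (h t) * (if j = h t then 1 else 0)) =
        (\<Sum>j'\<in>I. M i j' * (if j = j' then 1 else 0))"
      by (rule sum.reindex_bij_betw[OF h])
    also have "\<dots> = M i j"
      using assms that by (simp add: if_distrib cong: if_cong)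
    finally show ?thesis ..
  qed
  show ?thesis
    by (rule exI[of _ "card I"], rule exI[of _ "\<lambda>t i. M i (h t)"],
        rule exI[of _ "\<lambda>t j. if j = h t then 1 else 0"]) (use dec in blast)
qed

lemma mat_rank_eq_1D:
  assumes "mat_rank I M = 1" "finite I"
  obtains u v where "\<And>i j. i \<in> I \<Longrightarrow> j \<in> I \<Longrightarrow> M i j = u i * v j"
proof -
  let ?P = "\<lambda>r. \<exists>u v :: nat \<Rightarrow> nat list \<Rightarrow> 'a. \<forall>i\<in>I. \<forall>j\<in>I. M i j = (\<Sum>t<r. u t i * v t j)"
  have "?P (Least ?P)"
    using ex_outer_product_sum[OF assms(2)] by (rule LeastI_ex)
  then have "?P 1"
    using assms(1) by (simp add: mat_rank_def)
  then show thesis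
    using that by auto
qed

lemma mat_rank_single_entry:
  assumes "i0 \<in> I" "j0 \<in> I" "c \<noteq> 0"
  shows "mat_rank I (\<lambda>i j. if i = i0 \<and> j = j0 then c else 0) = 1"
  unfolding mat_rank_def
proof (rule Least_equality)
  show "\<exists>u v :: nat \<Rightarrow> nat list \<Rightarrow> 'a. \<forall>i\<in>I. \<forall>j\<in>I.
      (if i = i0 \<and> j = j0 then c else 0) = (\<Sum>t<1. u t i * v t j)"
    by (rule exI[of _ "\<lambda>t i. if i = i0 then c else 0"], rule exI[of _ "\<lambda>t j. if j = j0 then 1 else 0"])
      auto
next
  fix r
  assume "\<exists>u v :: nat \<Rightarrow> nat list \<Rightarrow> 'a. \<forall>i\<in>I. \<forall>j\<in>I.
      (if i = i0 \<and> j = j0 then c else 0) = (\<Sum>t<r. u t i * v t j)"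
  then obtain u v :: "nat \<Rightarrow> nat list \<Rightarrow> 'a" where "c = (\<Sum>t<r. u t i0 * v t j0)"
    using assms by force
  then show "1 \<le> r"
    using assms(3) by (cases r) auto
qed

lemma ex_PT_decomposition:
  fixes M :: "nat list \<Rightarrow> nat list \<Rightarrow> 'a::field"
  shows "\<exists>(r::nat) B. (\<forall>t<r. is_mat n d (B t) \<and> PT_basic n d (B t)) \<and>
      (\<forall>i\<in>idx n d. \<forall>j\<in>idx n d. M i j = (\<Sum>t<r. B t i j))"
proof -
  define Z where "Z = {(i, j) \<in> idx n d \<times> idx n d. M i j \<noteq> 0}"
  have "finite Z"
    unfolding Z_def using finite_idx by (auto intro: finite_subset)
  then obtain h where h: "bij_betw h {..<card Z} Z"
    by (rule bij_betw_lessThan_card)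
  define B where "B t i j = (if (i, j) = h t then M i j else 0)" for t i j
  have "is_mat n d (B t) \<and> PT_basic n d (B t)" if t: "t < card Z" for t
  proof -
    obtain i0 j0 where ij0: "h t = (i0, j0)" "i0 \<in> idx n d" "j0 \<in> idx n d" "M i0 j0 \<noteq> 0"
      using bij_betw_apply[OF h, of t] t by (cases "h t") (auto simp: Z_def)
    have "mat_rank (idx n d) (ptrans n d {} (B t)) =
        mat_rank (idx n d) (\<lambda>i j. if i = i0 \<and> j = j0 then M i0 j0 else 0)"
      by (rule mat_rank_cong) (auto simp: ptrans_def B_def ij0(1))
    also have "\<dots> = 1"
      using ij0 by (intro mat_rank_single_entry)
    finally show ?thesis
      using ij0 by (auto simp: PT_basic_def is_mat_def B_def)
  qed
  moreover have "M i j = (\<Sum>t<card Z. B t i j)" if "i \<in> idx n d" "j \<in> idx n d" for i j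
  proof -
    have "(\<Sum>t<card Z. B t i j) = (\<Sum>z\<in>Z. if (i, j) = z then M i j else 0)"
      unfolding B_def by (rule sum.reindex_bij_betw[OF h])
    also have "\<dots> = M i j"
      using \<open>finite Z\<close> that by (auto simp: Z_def)
    finally show ?thesis ..
  qed
  ultimately show ?thesis
    by blast
qed

lemma PT_basicE:
  assumes "PT_basic n d B"
  obtains \<kappa> u v where "\<kappa> \<subseteq> {..<d}"
    and "\<And>i j. i \<in> idx n d \<Longrightarrow> j \<in> idx n d \<Longrightarrow> B i j = u (swap_idx \<kappa> i j) * v (swap_idx \<kappa> j i)"
proof -
  obtain \<kappa> where \<kappa>: "\<kappa> \<subseteq> {..<d}" "mat_rank (idx n d) (ptrans n d \<kappa> B) = 1"
    using assms by (auto simp: PT_basic_def)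
  obtain u v where uv: "\<And>i j. i \<in> idx n d \<Longrightarrow> j \<in> idx n d \<Longrightarrow> ptrans n d \<kappa> B i j = u i * v j"
    using mat_rank_eq_1D[OF \<kappa>(2) finite_idx] by blast
  show thesis
  proof (rule that[OF \<kappa>(1)])
    fix i j assume ij: "i \<in> idx n d" "j \<in> idx n d"
    show "B i j = u (swap_idx \<kappa> i j) * v (swap_idx \<kappa> j i)"
      using ptrans_at_swap_idx[OF ij] uv swap_idx_in_idx[OF ij] swap_idx_in_idx[OF ij(2,1)]
      by metis
  qed
qed

lemma PT_rank_decomposition:
  fixes M :: "nat list \<Rightarrow> nat list \<Rightarrow> 'a::field"
  obtains B where "\<And>t. t < PT_rank n d M \<Longrightarrow> PT_basic n d (B t)"
    and "\<And>i j. i \<in> idx n d \<Longrightarrow> j \<in> idx n d \<Longrightarrow> M i j = (\<Sum>t<PT_rank n d M. B t i j)"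
proof -
  let ?P = "\<lambda>r. \<exists>B :: nat \<Rightarrow> nat list \<Rightarrow> nat list \<Rightarrow> 'a.
      (\<forall>t<r. is_mat n d (B t) \<and> PT_basic n d (B t)) \<and>
      (\<forall>i\<in>idx n d. \<forall>j\<in>idx n d. M i j = (\<Sum>t<r. B t i j))"
  have "?P (Least ?P)"
    using ex_PT_decomposition by (rule LeastI_ex)
  then show thesis
    using that unfolding PT_rank_def by blast
qed

section \<open>A parametrisation of the matrices of bounded PT-rank\<close>

text \<open>A matrix of PT-rank at most \<open>R\<close> is parametrised by a pattern \<open>\<sigma>\<close>, choosing the partial
  transpose \<open>\<sigma> t\<close> of the \<open>t\<close>-th term, and by values \<open>x (t, True, w)\<close> and \<open>x (t, False, w)\<close>
  of the row and column factors of that term.\<close>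

definition pt_patterns :: "nat \<Rightarrow> nat \<Rightarrow> (nat \<Rightarrow> nat set) set" where
  "pt_patterns R d = {..<R} \<rightarrow>\<^sub>E Pow {..<d}"

definition pt_vars :: "nat \<Rightarrow> nat \<Rightarrow> nat \<Rightarrow> (nat \<times> bool \<times> nat list) set" where
  "pt_vars R n d = {..<R} \<times> UNIV \<times> idx n d"

definition pt_param :: "nat \<Rightarrow> nat \<Rightarrow> nat \<Rightarrow> (nat \<Rightarrow> nat set) \<Rightarrow> (nat \<times> bool \<times> nat list \<Rightarrow> 'a::comm_semiring_0)
    \<Rightarrow> nat list \<Rightarrow> nat list \<Rightarrow> 'a" where
  "pt_param R n d \<sigma> x i j = (if i \<in> idx n d \<and> j \<in> idx n d then
     (\<Sum>t<R. x (t, True, swap_idx (\<sigma> t) i j) * x (t, False, swap_idx (\<sigma> t) j i)) else 0)"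

lemma finite_pt_patterns: "finite (pt_patterns R d)"
  by (simp add: pt_patterns_def finite_PiE)

lemma card_pt_patterns: "card (pt_patterns R d) = 2 ^ (d * R)"
  by (simp add: pt_patterns_def card_PiE card_Pow power_mult)

lemma finite_pt_vars: "finite (pt_vars R n d)"
  by (simp add: pt_vars_def finite_idx)

lemma card_pt_vars: "card (pt_vars R n d) = R * (2 * n ^ d)"
  by (simp add: pt_vars_def card_cartesian_product card_idx)

lemma PT_rank_le_imp_ptrans_outer_sum:
  fixes M :: "nat list \<Rightarrow> nat list \<Rightarrow> 'a::field"
  assumes "PT_rank n d M \<le> R"
  obtains \<kappa> u v where "\<And>t. \<kappa> t \<subseteq> {..<d}"
    and "\<And>i j. i \<in> idx n d \<Longrightarrow> j \<in> idx n d \<Longrightarrow>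
      M i j = (\<Sum>t<R. u t (swap_idx (\<kappa> t) i j) * v t (swap_idx (\<kappa> t) j i))"
proof -
  define r where "r = PT_rank n d M"
  obtain B where B: "\<And>t. t < r \<Longrightarrow> PT_basic n d (B t)"
    "\<And>i j. i \<in> idx n d \<Longrightarrow> j \<in> idx n d \<Longrightarrow> M i j = (\<Sum>t<r. B t i j)"
    using PT_rank_decomposition unfolding r_def by blast
  have "\<forall>t. \<exists>\<kappa> u v. t < r \<longrightarrow> \<kappa> \<subseteq> {..<d} \<and>
      (\<forall>i\<in>idx n d. \<forall>j\<in>idx n d. B t i j = u (swap_idx \<kappa> i j) * v (swap_idx \<kappa> j i))"
    by (metis B(1) PT_basicE)
  then obtain \<kappa> u v where \<kappa>: "\<And>t. t < r \<Longrightarrow> \<kappa> t \<subseteq> {..<d}"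
    and uv: "\<And>t i j. t < r \<Longrightarrow> i \<in> idx n d \<Longrightarrow> j \<in> idx n d \<Longrightarrow>
      B t i j = u t (swap_idx (\<kappa> t) i j) * v t (swap_idx (\<kappa> t) j i)"
    by metis
  define \<kappa>' where "\<kappa>' t = (if t < r then \<kappa> t else {})" for t
  define u' where "u' t = (if t < r then u t else 0)" for t
  show thesis
  proof (rule that[of \<kappa>' u' v])
    show "\<kappa>' t \<subseteq> {..<d}" for t
      using \<kappa> by (simp add: \<kappa>'_def)
    fix i j
    assume ij: "i \<in> idx n d" "j \<in> idx n d"
    have "(\<Sum>t<R. u' t (swap_idx (\<kappa>' t) i j) * v t (swap_idx (\<kappa>' t) j i)) =
        (\<Sum>t<R. if t < r then B t i j else 0)"
      using ij by (intro sum.cong) (auto simp: uv \<kappa>'_def u'_def)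
    also have "\<dots> = (\<Sum>t<r. B t i j)"
      using assms by (simp add: sum.If_cases r_def Int_absorb1 flip: lessThan_def)
    finally show "M i j = (\<Sum>t<R. u' t (swap_idx (\<kappa>' t) i j) * v t (swap_idx (\<kappa>' t) j i))"
      using B(2) ij by simp
  qed
qed

lemma PT_rank_le_imp_pt_param:
  fixes M :: "nat list \<Rightarrow> nat list \<Rightarrow> 'a::field"
  assumes "is_mat n d M" "PT_rank n d M \<le> R"
  shows "\<exists>\<sigma>\<in>pt_patterns R d. \<exists>x\<in>pt_vars R n d \<rightarrow>\<^sub>E UNIV. M = pt_param R n d \<sigma> x"
proof -
  obtain \<kappa> u v where \<kappa>: "\<And>t. \<kappa> t \<subseteq> {..<d}"
    and M: "\<And>i j. i \<in> idx n d \<Longrightarrow> j \<in> idx n d \<Longrightarrow>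
      M i j = (\<Sum>t<R. u t (swap_idx (\<kappa> t) i j) * v t (swap_idx (\<kappa> t) j i))"
    using PT_rank_le_imp_ptrans_outer_sum[OF assms(2)] by blast
  define \<sigma> where "\<sigma> = restrict \<kappa> {..<R}"
  define x where "x = (\<lambda>(t, b, w)\<in>pt_vars R n d. if b then u t w else v t w)"
  have "\<sigma> \<in> pt_patterns R d"
    using \<kappa> by (auto simp: pt_patterns_def \<sigma>_def)
  moreover have "x \<in> pt_vars R n d \<rightarrow>\<^sub>E UNIV"
    by (simp add: x_def)
  moreover have "M i j = pt_param R n d \<sigma> x i j" for i j
  proof (cases "i \<in> idx n d \<and> j \<in> idx n d")
    case True
    then show ?thesis
      using swap_idx_in_idx[of i n d j] swap_idx_in_idx[of j n d i]
      by (auto simp: M pt_param_def x_def \<sigma>_def pt_vars_def intro!: sum.cong)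
  next
    case False
    then show ?thesis
      using assms(1) by (auto simp: is_mat_def pt_param_def)
  qed
  ultimately show ?thesis
    by blast
qed

lemma PT_rank_le_subset_pt_param_image:
  "{M :: nat list \<Rightarrow> nat list \<Rightarrow> 'a::field. is_mat n d M \<and> PT_rank n d M \<le> R}
    \<subseteq> (\<lambda>(\<sigma>, x). pt_param R n d \<sigma> x) ` (pt_patterns R d \<times> (pt_vars R n d \<rightarrow>\<^sub>E UNIV))"
  using PT_rank_le_imp_pt_param by fast

lemma
  assumes "finite (UNIV :: 'a set)"
  shows finite_PT_rank_le:
      "finite {M :: nat list \<Rightarrow> nat list \<Rightarrow> 'a::field. is_mat n d M \<and> PT_rank n d M \<le> R}"
    and card_PT_rank_le:
      "card {M :: nat list \<Rightarrow> nat list \<Rightarrow> 'a. is_mat n d M \<and> PT_rank n d M \<le> R}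
        \<le> 2 ^ (d * R) * card (UNIV :: 'a set) ^ card (pt_vars R n d)"
proof -
  let ?P = "pt_patterns R d \<times> (pt_vars R n d \<rightarrow>\<^sub>E (UNIV :: 'a set))"
  have fin: "finite ?P"
    using assms by (simp add: finite_pt_patterns finite_pt_vars finite_PiE)
  then show "finite {M :: nat list \<Rightarrow> nat list \<Rightarrow> 'a. is_mat n d M \<and> PT_rank n d M \<le> R}"
    by (rule finite_subset[OF PT_rank_le_subset_pt_param_image finite_imageI])
  have "card {M :: nat list \<Rightarrow> nat list \<Rightarrow> 'a. is_mat n d M \<and> PT_rank n d M \<le> R}
      \<le> card ((\<lambda>(\<sigma>, x). pt_param R n d \<sigma> x) ` ?P)"
    by (rule card_mono[OF finite_imageI[OF fin] PT_rank_le_subset_pt_param_image])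
  also have "\<dots> \<le> card ?P"
    by (rule card_image_le[OF fin])
  also have "card ?P = 2 ^ (d * R) * card (UNIV :: 'a set) ^ card (pt_vars R n d)"
    by (simp add: card_cartesian_product card_pt_patterns card_PiE finite_pt_vars)
  finally show "card {M :: nat list \<Rightarrow> nat list \<Rightarrow> 'a. is_mat n d M \<and> PT_rank n d M \<le> R}
      \<le> 2 ^ (d * R) * card (UNIV :: 'a set) ^ card (pt_vars R n d)" .
qed

section \<open>Free entries of fully symmetric matrices\<close>

definition sorted_pairs :: "nat \<Rightarrow> nat \<Rightarrow> (nat list \<times> nat list) set" where
  "sorted_pairs n d = {(i, j). i \<in> idx n d \<and> j \<in> idx n d \<and> (\<forall>p<d. i ! p \<le> j ! p)}"

text \<open>Sorting every coordinate pair \<open>(i ! p, j ! p)\<close> is invariant under all partial transposes,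
  so the entries of a fully symmetric matrix at sorted pairs can be prescribed freely.\<close>

definition fs_extend :: "nat \<Rightarrow> nat \<Rightarrow> (nat list \<times> nat list \<Rightarrow> 'a::zero) \<Rightarrow> nat list \<Rightarrow> nat list \<Rightarrow> 'a" where
  "fs_extend n d y i j = (if i \<in> idx n d \<and> j \<in> idx n d then y (map2 min i j, map2 max i j) else 0)"

lemma fs_extend_in_FS: "fs_extend n d y \<in> FS n d"
proof -
  have "ptrans n d {k} (fs_extend n d y) i j = fs_extend n d y i j" for k i j
  proof (cases "i \<in> idx n d \<and> j \<in> idx n d")
    case True
    then have "length i = d" "length j = d"
      by (auto simp: idx_length)
    then have "map2 min (swap_idx {k} i j) (swap_idx {k} j i) = map2 min i j"
      "map2 max (swap_idx {k} i j) (swap_idx {k} j i) = map2 max i j"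
      by (auto intro!: nth_equalityI simp: min.commute max.commute)
    then show ?thesis
      using True swap_idx_in_idx[of i n d j] swap_idx_in_idx[of j n d i]
      by (simp add: ptrans_def fs_extend_def)
  qed (auto simp: ptrans_def fs_extend_def)
  then have "ptrans n d {k} (fs_extend n d y) = fs_extend n d y" for k
    by (intro ext)
  then show ?thesis
    by (auto simp: FS_def fully_symmetric_def is_mat_def fs_extend_def)
qed

lemma fs_extend_sorted_pair:
  assumes "(i, j) \<in> sorted_pairs n d"
  shows "fs_extend n d y i j = y (i, j)"
proof -
  have "length i = d" "length j = d" "\<forall>p<d. i ! p \<le> j ! p"
    using assms by (auto simp: sorted_pairs_def idx_length)
  then have "map2 min i j = i" "map2 max i j = j"
    by (auto intro!: nth_equalityI simp: min_def max_def)
  then show ?thesis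
    using assms by (simp add: sorted_pairs_def fs_extend_def)
qed

lemma sorted_pairs_subset: "sorted_pairs n d \<subseteq> idx n d \<times> idx n d"
  by (auto simp: sorted_pairs_def)

lemma finite_sorted_pairs: "finite (sorted_pairs n d)"
  by (rule finite_subset[OF sorted_pairs_subset]) (simp add: finite_idx)

lemma card_ordered_pairs_ge: "n * n \<le> 2 * card {(a, b). a \<le> b \<and> b < (n::nat)}"
proof -
  let ?C = "{(a, b). a \<le> b \<and> b < (n::nat)}"
  have fin: "finite ?C"
    by (rule finite_subset[of _ "{..<n} \<times> {..<n}"]) auto
  have "{..<n} \<times> {..<n} \<subseteq> ?C \<union> prod.swap ` ?C"
  proof
    fix z :: "nat \<times> nat"
    assume "z \<in> {..<n} \<times> {..<n}"
    then show "z \<in> ?C \<union> prod.swap ` ?C"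
      by (cases z; cases "fst z \<le> snd z") (auto intro: image_eqI[where x="prod.swap z"])
  qed
  then have "card ({..<n} \<times> {..<n}) \<le> card ?C + card (prod.swap ` ?C)"
    using fin by (meson card_Un_le card_mono finite_UnI finite_imageI order_trans)
  also have "card (prod.swap ` ?C) \<le> card ?C"
    by (rule card_image_le[OF fin])
  finally show ?thesis
    by (simp add: card_cartesian_product)
qed

lemma card_sorted_pairs_ge: "n ^ (2 * d) \<le> 2 ^ d * card (sorted_pairs n d)"
proof -
  let ?C = "{(a, b). a \<le> b \<and> b < (n::nat)}"
  let ?L = "{ps. set ps \<subseteq> ?C \<and> length ps = d}"
  let ?unzip = "\<lambda>ps. (map fst ps, map snd ps)"
  have fin: "finite ?C"
    by (rule finite_subset[of _ "{..<n} \<times> {..<n}"]) auto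
  have "inj_on ?unzip ?L"
    by (rule inj_onI) (metis prod.inject zip_map_fst_snd)
  moreover have "?unzip ps \<in> sorted_pairs n d" if "ps \<in> ?L" for ps
  proof -
    have "fst w \<le> snd w \<and> snd w < n" if "w \<in> set ps" for w
      using \<open>ps \<in> ?L\<close> that by auto
    then show ?thesis
      using \<open>ps \<in> ?L\<close> by (fastforce simp: sorted_pairs_def idx_def)
  qed
  ultimately have "card ?L \<le> card (sorted_pairs n d)"
    by (intro card_inj_on_le[OF _ _ finite_sorted_pairs]) auto
  then have "card ?C ^ d \<le> card (sorted_pairs n d)"
    by (simp add: card_lists_length_eq[OF fin])
  then have "(2 * card ?C) ^ d \<le> 2 ^ d * card (sorted_pairs n d)"
    by (simp add: power_mult_distrib)
  moreover have "n ^ (2 * d) \<le> (2 * card ?C) ^ d"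
    using power_mono[OF card_ordered_pairs_ge] by (simp add: power_mult power2_eq_square)
  ultimately show ?thesis
    by linarith
qed

lemma finite_FS:
  assumes "finite (UNIV :: 'a set)"
  shows "finite (FS n d :: (nat list \<Rightarrow> nat list \<Rightarrow> 'a::zero) set)"
proof -
  let ?extend = "\<lambda>f i j. if (i, j) \<in> idx n d \<times> idx n d then f (i, j) else 0"
  have "FS n d \<subseteq> ?extend ` (idx n d \<times> idx n d \<rightarrow>\<^sub>E (UNIV :: 'a set))"
  proof
    fix M :: "nat list \<Rightarrow> nat list \<Rightarrow> 'a"
    assume "M \<in> FS n d"
    then have "M = ?extend (\<lambda>(i, j)\<in>idx n d \<times> idx n d. M i j)"
      by (auto simp: FS_def fully_symmetric_def is_mat_def intro!: ext)
    then show "M \<in> ?extend ` (idx n d \<times> idx n d \<rightarrow>\<^sub>E UNIV)"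
      by (intro image_eqI[where x="\<lambda>(i, j)\<in>idx n d \<times> idx n d. M i j"]) auto
  qed
  then show ?thesis
    by (rule finite_subset) (simp add: assms finite_idx finite_PiE)
qed

lemma card_FS_ge:
  assumes "finite (UNIV :: 'a set)"
  shows "card (UNIV :: 'a set) ^ card (sorted_pairs n d) \<le> card (FS n d :: (nat list \<Rightarrow> nat list \<Rightarrow> 'a::zero) set)"
proof -
  have "inj_on (fs_extend n d :: _ \<Rightarrow> _ \<Rightarrow> _ \<Rightarrow> 'a) (sorted_pairs n d \<rightarrow>\<^sub>E UNIV)"
  proof (rule inj_onI, rule ext)
    fix y y' :: "nat list \<times> nat list \<Rightarrow> 'a" and z
    assume "y \<in> sorted_pairs n d \<rightarrow>\<^sub>E UNIV" "y' \<in> sorted_pairs n d \<rightarrow>\<^sub>E UNIV"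
      and "fs_extend n d y = fs_extend n d y'"
    then show "y z = y' z"
      by (cases "z \<in> sorted_pairs n d") (metis prod.collapse fs_extend_sorted_pair, metis PiE_arb)
  qed
  then have "card (sorted_pairs n d \<rightarrow>\<^sub>E (UNIV :: 'a set)) \<le> card (FS n d :: (_ \<Rightarrow> _ \<Rightarrow> 'a) set)"
    using finite_FS[OF assms] fs_extend_in_FS by (intro card_inj_on_le) auto
  then show ?thesis
    by (simp add: card_PiE finite_sorted_pairs)
qed

section \<open>Parameters against free entries\<close>

lemma ex_greatest_nat_less:
  fixes b :: real
  assumes "real r0 < b"
  obtains R :: nat where "real R < b" "\<And>r. real r < b \<Longrightarrow> r \<le> R"
proof
  show "real (nat (\<lceil>b\<rceil> - 1)) < b"
    using assms ceiling_correct[of b] by linarith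
  show "r \<le> nat (\<lceil>b\<rceil> - 1)" if "real r < b" for r
    using that ceiling_correct[of b] by linarith
qed

lemma card_pt_vars_margin_less_card_sorted_pairs:
  fixes \<epsilon> :: real
  assumes "real R < (1 / 2 ^ (d + 1) - \<epsilon>) * real n ^ d"
  shows "real (card (pt_vars R n d)) + 2 * \<epsilon> * real n ^ (2 * d) < real (card (sorted_pairs n d))"
proof -
  define X where "X = real n ^ d"
  have X2: "X\<^sup>2 = real n ^ (2 * d)"
    unfolding X_def by (metis power_mult mult.commute)
  have "X > 0"
  proof (rule ccontr)
    assume "\<not> X > 0"
    then have "X = 0"
      by (simp add: X_def)
    then show False
      using assms by (simp add: X_def zero_power)
  qed
  have "2 * real R * X < 2 * ((1 / 2 ^ (d + 1) - \<epsilon>) * X) * X"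
    using assms \<open>X > 0\<close> by (simp add: X_def)
  also have "\<dots> = X\<^sup>2 / 2 ^ d - 2 * \<epsilon> * X\<^sup>2"
    by (simp add: field_simps power2_eq_square)
  also have "X\<^sup>2 / 2 ^ d \<le> real (card (sorted_pairs n d))"
  proof -
    have "real (n ^ (2 * d)) \<le> real (2 ^ d * card (sorted_pairs n d))"
      using card_sorted_pairs_ge by (simp only: of_nat_le_iff)
    then show ?thesis
      by (simp add: X2 field_simps)
  qed
  finally have "2 * real R * X + 2 * \<epsilon> * X\<^sup>2 < real (card (sorted_pairs n d))"
    by simp
  then show ?thesis
    unfolding X2[symmetric] by (simp add: X_def card_pt_vars)
qed

lemma card_pt_vars_less_card_sorted_pairs:
  fixes \<epsilon> :: real
  assumes "\<epsilon> > 0" "real R < (1 / 2 ^ (d + 1) - \<epsilon>) * real n ^ d"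
  shows "card (pt_vars R n d) < card (sorted_pairs n d)"
proof -
  have "0 \<le> 2 * \<epsilon> * real n ^ (2 * d)"
    using assms(1) by simp
  then have "real (card (pt_vars R n d)) < real (card (sorted_pairs n d))"
    using card_pt_vars_margin_less_card_sorted_pairs[OF assms(2)] by linarith
  then show ?thesis
    by (simp only: of_nat_less_iff)
qed

lemma card_pt_vars_add_le_card_sorted_pairs:
  fixes \<epsilon> :: real
  assumes "\<epsilon> > 0" "d \<ge> 1" "n \<ge> 1" "real d + 1 \<le> 2 * \<epsilon> * real n"
    and R: "real R < (1 / 2 ^ (d + 1) - \<epsilon>) * real n ^ d"
  shows "card (pt_vars R n d) + (d * R + n) \<le> card (sorted_pairs n d)"
proof -
  have n_le: "real n \<le> real n ^ d"
    using assms(2,3) by (simp add: self_le_power)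
  have "(1::real) \<le> 2 ^ (d + 1)"
    by (rule one_le_power) simp
  then have "1 / 2 ^ (d + 1) \<le> (1::real)"
    by simp
  then have "1 / 2 ^ (d + 1) - \<epsilon> \<le> 1"
    using assms(1) by linarith
  then have "(1 / 2 ^ (d + 1) - \<epsilon>) * real n ^ d \<le> 1 * real n ^ d"
    by (intro mult_right_mono) auto
  then have "real R \<le> real n ^ d"
    using R by linarith
  then have "real d * real R \<le> real d * real n ^ d"
    by (rule mult_left_mono) simp
  then have "real (d * R + n) \<le> (real d + 1) * real n ^ d"
    using n_le by (simp only: of_nat_add of_nat_mult distrib_right mult_1_left)
  also have "\<dots> \<le> 2 * \<epsilon> * real n * real n ^ d"
    using assms(4) by (rule mult_right_mono) simp
  also have "\<dots> \<le> 2 * \<epsilon> * real n ^ d * real n ^ d"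
    using n_le assms(1) by (intro mult_right_mono mult_left_mono) auto
  also have "\<dots> = 2 * \<epsilon> * real n ^ (2 * d)"
    by (metis mult_2 power_add mult.assoc)
  finally have "real (card (pt_vars R n d) + (d * R + n)) < real (card (sorted_pairs n d))"
    using card_pt_vars_margin_less_card_sorted_pairs[OF R] by (simp only: of_nat_add)
  then show ?thesis
    by (simp only: of_nat_less_iff less_imp_le)
qed

section \<open>Finite fields\<close>

lemma card_low_PT_rank_FS_le:
  fixes \<epsilon> :: real
  assumes "\<epsilon> > 0" "d \<ge> 1" "finite (UNIV :: 'a::field set)" "n \<ge> 1"
    and "real d + 1 \<le> 2 * \<epsilon> * real n"
  shows "card {M :: nat list \<Rightarrow> nat list \<Rightarrow> 'a. M \<in> FS n d \<and>
      real (PT_rank n d M) < (1 / 2 ^ (d + 1) - \<epsilon>) * real n ^ d} * 2 ^ n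
    \<le> card (FS n d :: (nat list \<Rightarrow> nat list \<Rightarrow> 'a) set)"
    (is "card ?S * _ \<le> _")
proof (cases "?S = {}")
  case False
  then obtain R where R: "real R < (1 / 2 ^ (d + 1) - \<epsilon>) * real n ^ d"
    and R_greatest: "\<And>r. real r < (1 / 2 ^ (d + 1) - \<epsilon>) * real n ^ d \<Longrightarrow> r \<le> R"
    by (auto elim: ex_greatest_nat_less)
  define q where "q = card (UNIV :: 'a set)"
  have "2 \<le> q"
    using card_mono[OF assms(3), of "{0, 1}"] by (simp add: q_def)
  have "?S \<subseteq> {M. is_mat n d M \<and> PT_rank n d M \<le> R}"
    using R_greatest by (simp add: FS_def fully_symmetric_def Collect_mono_iff)
  then have "card ?S \<le> card {M :: nat list \<Rightarrow> nat list \<Rightarrow> 'a. is_mat n d M \<and> PT_rank n d M \<le> R}"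
    by (rule card_mono[OF finite_PT_rank_le[OF assms(3)]])
  also have "\<dots> \<le> 2 ^ (d * R) * q ^ card (pt_vars R n d)"
    unfolding q_def by (rule card_PT_rank_le[OF assms(3)])
  finally have "card ?S * 2 ^ n \<le> 2 ^ (d * R) * q ^ card (pt_vars R n d) * 2 ^ n"
    by simp
  also have "\<dots> = q ^ card (pt_vars R n d) * 2 ^ (d * R + n)"
    by (simp add: power_add)
  also have "\<dots> \<le> q ^ card (pt_vars R n d) * q ^ (d * R + n)"
    using \<open>2 \<le> q\<close> by (intro mult_left_mono power_mono) auto
  also have "\<dots> \<le> q ^ card (sorted_pairs n d)"
    using \<open>2 \<le> q\<close> card_pt_vars_add_le_card_sorted_pairs[OF assms(1,2,4,5) R]
    by (simp flip: power_add)
  also have "\<dots> \<le> card (FS n d :: (nat list \<Rightarrow> nat list \<Rightarrow> 'a) set)"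
    unfolding q_def by (rule card_FS_ge[OF assms(3)])
  finally show ?thesis .
next
  case True
  then show ?thesis
    by (simp only: card.empty mult_0 zero_le)
qed

lemma low_PT_rank_fraction_tendsto_0:
  fixes \<epsilon> :: real
  assumes "\<epsilon> > 0" "d \<ge> 1" "finite (UNIV :: 'a::field set)"
  shows "(\<lambda>n. real (card {M :: nat list \<Rightarrow> nat list \<Rightarrow> 'a. M \<in> FS n d \<and>
             real (PT_rank n d M) < (1 / 2 ^ (d + 1) - \<epsilon>) * real n ^ d})
           / real (card (FS n d :: (nat list \<Rightarrow> nat list \<Rightarrow> 'a) set))) \<longlonglongrightarrow> 0"
    (is "(\<lambda>n. real (card (?S n)) / real (card (?FS n))) \<longlonglongrightarrow> 0")
proof (rule tendsto_sandwich[OF _ _ tendsto_const LIMSEQ_power_zero[of "1 / 2 :: real"]])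
  show "\<forall>\<^sub>F n in sequentially. 0 \<le> real (card (?S n)) / real (card (?FS n))"
    by simp
  have "real (card (?S n)) / real (card (?FS n)) \<le> (1 / 2) ^ n"
    if "n \<ge> nat \<lceil>(real d + 1) / (2 * \<epsilon>)\<rceil> + 1" for n
  proof -
    have "(real d + 1) / (2 * \<epsilon>) \<le> real n"
      using that real_nat_ceiling_ge[of "(real d + 1) / (2 * \<epsilon>)"] by linarith
    then have "real d + 1 \<le> 2 * \<epsilon> * real n"
      using assms(1) by (simp add: pos_divide_le_eq mult.commute)
    then have "card (?S n) * 2 ^ n \<le> card (?FS n)"
      using that by (intro card_low_PT_rank_FS_le[OF assms]) auto
    then have "real (card (?S n) * 2 ^ n) \<le> real (card (?FS n))"
      by (simp only: of_nat_le_iff)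
    then have le: "real (card (?S n)) * 2 ^ n \<le> real (card (?FS n))"
      by (simp only: of_nat_mult of_nat_power of_nat_numeral)
    have ratio: "a / c \<le> (1 / 2) ^ n" if "a * 2 ^ n \<le> c" "0 < c" for a c :: real
      using that by (simp add: power_one_over field_simps)
    show ?thesis
    proof (rule ratio[OF le])
      show "0 < real (card (?FS n))"
        using fs_extend_in_FS[of n d] finite_FS[OF assms(3)] by (auto simp: card_gt_0_iff)
    qed
  qed
  then show "\<forall>\<^sub>F n in sequentially. real (card (?S n)) / real (card (?FS n)) \<le> (1 / 2) ^ n"
    by (rule eventually_sequentiallyI)
qed simp

section \<open>Spaces of polynomial functions\<close>

lemma sum_fun_apply: "(\<Sum>i\<in>I. F i) x = (\<Sum>i\<in>I. F i x)"
  by (induction I rule: infinite_finite_induct) auto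

definition fun_scale :: "'a::field \<Rightarrow> ('b \<Rightarrow> 'a) \<Rightarrow> 'b \<Rightarrow> 'a" where
  "fun_scale c f z = c * f z"

interpretation fun_vs: vector_space "fun_scale :: 'a::field \<Rightarrow> ('b \<Rightarrow> 'a) \<Rightarrow> 'b \<Rightarrow> 'a"
  by unfold_locales (auto simp: fun_scale_def fun_eq_iff algebra_simps)

lemma fun_span_map:
  fixes L :: "('b \<Rightarrow> 'a::field) \<Rightarrow> 'c \<Rightarrow> 'a"
  assumes "f \<in> fun_vs.span B"
    and "L 0 = 0" "\<And>c g h. L (fun_scale c g + h) = fun_scale c (L g) + L h"
    and "\<And>b. b \<in> B \<Longrightarrow> L b \<in> fun_vs.span C"
  shows "L f \<in> fun_vs.span C"
  using assms(1)
proof (induction rule: fun_vs.span_induct_alt)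
  case base
  show ?case
    by (simp only: assms(2) fun_vs.span_zero)
next
  case (step c b g)
  have "fun_scale c (L b) + L g \<in> fun_vs.span C"
    by (intro fun_vs.span_add fun_vs.span_scale assms(4) step)
  then show ?case
    by (simp only: assms(3))
qed

lemma fun_span_mult:
  fixes f g :: "'b \<Rightarrow> 'a::field"
  assumes "f \<in> fun_vs.span A" "g \<in> fun_vs.span B"
    and "\<And>a b. a \<in> A \<Longrightarrow> b \<in> B \<Longrightarrow> a * b \<in> fun_vs.span C"
  shows "f * g \<in> fun_vs.span C"
proof -
  have ag: "a * g \<in> fun_vs.span C" if "a \<in> A" for a
  proof (rule fun_span_map[OF assms(2)])
    show "a * 0 = 0" "a * (fun_scale c h + h') = fun_scale c (a * h) + a * h'" for c h h'
      by (simp_all add: fun_scale_def fun_eq_iff algebra_simps)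
    show "a * b \<in> fun_vs.span C" if "b \<in> B" for b
      using assms(3) \<open>a \<in> A\<close> that .
  qed
  show ?thesis
  proof (rule fun_span_map[OF assms(1), where L="\<lambda>h. h * g"])
    show "0 * g = 0" "(fun_scale c h + h') * g = fun_scale c (h * g) + h' * g" for c h h'
      by (simp_all add: fun_scale_def fun_eq_iff algebra_simps)
  qed (rule ag)
qed

lemma fun_span_card_less_imp_dependent:
  fixes g :: "'i \<Rightarrow> 'b \<Rightarrow> 'a::field"
  assumes "finite T" "finite A" "card T < card A" "\<And>\<alpha>. \<alpha> \<in> A \<Longrightarrow> g \<alpha> \<in> fun_vs.span T"
  obtains c where "\<exists>\<alpha>\<in>A. c \<alpha> \<noteq> 0" "\<And>z. (\<Sum>\<alpha>\<in>A. c \<alpha> * g \<alpha> z) = 0"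
proof (cases "inj_on g A")
  case False
  then obtain \<alpha> \<beta> where \<alpha>\<beta>: "\<alpha> \<in> A" "\<beta> \<in> A" "\<alpha> \<noteq> \<beta>" "g \<alpha> = g \<beta>"
    by (auto simp: inj_on_def)
  define c :: "'i \<Rightarrow> 'a" where "c \<gamma> = (if \<gamma> = \<alpha> then 1 else if \<gamma> = \<beta> then -1 else 0)" for \<gamma>
  have "(\<Sum>\<gamma>\<in>A. c \<gamma> * g \<gamma> z) = 0" for z
  proof -
    have "(\<Sum>\<gamma>\<in>A. c \<gamma> * g \<gamma> z) =
        (\<Sum>\<gamma>\<in>A. (if \<gamma> = \<alpha> then g \<alpha> z else 0) - (if \<gamma> = \<beta> then g \<beta> z else 0))"
      using \<alpha>\<beta> by (intro sum.cong) (auto simp: c_def)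
    also have "\<dots> = 0"
      using \<alpha>\<beta> assms(2) by (simp add: sum_subtractf)
    finally show ?thesis .
  qed
  moreover have "c \<alpha> \<noteq> 0"
    by (simp add: c_def)
  ultimately show thesis
    using that \<alpha>\<beta>(1) by blast
next
  case True
  have "fun_vs.dependent (g ` A)"
  proof (rule ccontr)
    assume "fun_vs.independent (g ` A)"
    then have "card (g ` A) \<le> card T"
      using fun_vs.independent_span_bound[OF assms(1)] assms(4) by blast
    then show False
      using card_image[OF True] assms(3) by simp
  qed
  then obtain u where u: "\<exists>v\<in>g ` A. u v \<noteq> 0" "(\<Sum>v\<in>g ` A. fun_scale (u v) v) = 0"
    using fun_vs.dependent_finite[OF finite_imageI[OF assms(2)]] by blast
  show thesis
  proof (rule that[of "u \<circ> g"])
    show "\<exists>\<alpha>\<in>A. (u \<circ> g) \<alpha> \<noteq> 0"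
      using u(1) by auto
    show "(\<Sum>\<alpha>\<in>A. (u \<circ> g) \<alpha> * g \<alpha> z) = 0" for z
      using fun_cong[OF u(2), of z] by (simp add: sum_fun_apply fun_scale_def sum.reindex[OF True])
  qed
qed

definition monomial :: "'v set \<Rightarrow> ('v \<Rightarrow> nat) \<Rightarrow> ('v \<Rightarrow> 'a) \<Rightarrow> 'a::comm_semiring_1" where
  "monomial V \<alpha> x = (\<Prod>v\<in>V. x v ^ \<alpha> v)"

lemma monomial_cong: "(\<And>v. v \<in> V \<Longrightarrow> x v = y v) \<Longrightarrow> monomial V \<alpha> x = monomial V \<alpha> y"
  by (simp add: monomial_def)

definition polys_deg_le :: "'v set \<Rightarrow> nat \<Rightarrow> (('v \<Rightarrow> 'a::field) \<Rightarrow> 'a) set" where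
  "polys_deg_le V e = fun_vs.span (monomial V ` (V \<rightarrow>\<^sub>E {..e}))"

lemma polys_deg_le_mono: "a \<le> e \<Longrightarrow> polys_deg_le V a \<subseteq> polys_deg_le V e"
  unfolding polys_deg_le_def by (intro fun_vs.span_mono image_mono PiE_mono) auto

lemma polys_deg_le_mult:
  fixes V :: "'v set" and f g :: "('v \<Rightarrow> 'a::field) \<Rightarrow> 'a"
  assumes "f \<in> polys_deg_le V a" "g \<in> polys_deg_le V b"
  shows "(\<lambda>x. f x * g x) \<in> polys_deg_le V (a + b)"
proof -
  have monomial_mult: "(monomial V \<alpha> * monomial V \<beta> :: ('v \<Rightarrow> 'a) \<Rightarrow> 'a) \<in> fun_vs.span (monomial V ` (V \<rightarrow>\<^sub>E {..a + b}))"
    if "\<alpha> \<in> V \<rightarrow>\<^sub>E {..a}" "\<beta> \<in> V \<rightarrow>\<^sub>E {..b}" for \<alpha> \<beta> :: "'v \<Rightarrow> nat"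
  proof (rule fun_vs.span_base, rule image_eqI[where x="\<lambda>v\<in>V. \<alpha> v + \<beta> v"])
    show "monomial V \<alpha> * monomial V \<beta> = (monomial V (\<lambda>v\<in>V. \<alpha> v + \<beta> v) :: ('v \<Rightarrow> 'a) \<Rightarrow> 'a)"
      by (simp add: monomial_def fun_eq_iff power_add prod.distrib)
    show "(\<lambda>v\<in>V. \<alpha> v + \<beta> v) \<in> V \<rightarrow>\<^sub>E {..a + b}"
      using that by (auto intro: add_mono)
  qed
  have "f * g \<in> polys_deg_le V (a + b)"
    unfolding polys_deg_le_def
    by (rule fun_span_mult[OF assms[unfolded polys_deg_le_def]]) (auto intro: monomial_mult)
  then show ?thesis
    by (simp add: times_fun_def)
qed

lemma polys_deg_le_const: "(\<lambda>x. c :: 'a::field) \<in> polys_deg_le V 0"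
proof -
  have "(monomial V (\<lambda>v\<in>V. 0) :: _ \<Rightarrow> 'a) \<in> polys_deg_le V 0"
    unfolding polys_deg_le_def by (rule fun_vs.span_base, rule imageI) auto
  then have "fun_scale c (monomial V (\<lambda>v\<in>V. 0)) \<in> polys_deg_le V 0"
    unfolding polys_deg_le_def by (rule fun_vs.span_scale)
  moreover have "fun_scale c (monomial V (\<lambda>v\<in>V. 0)) = (\<lambda>x. c)"
    by (simp add: fun_eq_iff fun_scale_def monomial_def)
  ultimately show ?thesis
    by (simp only:)
qed

lemma polys_deg_le_var:
  fixes V :: "'v set"
  assumes "finite V" "v \<in> V"
  shows "(\<lambda>x :: 'v \<Rightarrow> 'a::field. x v) \<in> polys_deg_le V 1"
proof -
  have "monomial V (\<lambda>w\<in>V. if w = v then 1 else 0) x = x v" for x :: "'v \<Rightarrow> 'a"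
  proof -
    have "monomial V (\<lambda>w\<in>V. if w = v then 1 else 0) x = (\<Prod>w\<in>V. if w = v then x w else 1)"
      unfolding monomial_def by (rule prod.cong) auto
    also have "\<dots> = x v"
      using assms by simp
    finally show ?thesis .
  qed
  moreover have "(\<lambda>w\<in>V. if w = v then 1 else 0) \<in> V \<rightarrow>\<^sub>E {..1::nat}"
    by auto
  ultimately show ?thesis
    unfolding polys_deg_le_def by (intro fun_vs.span_base image_eqI[where x="\<lambda>w\<in>V. if w = v then 1 else 0"]) (auto simp: fun_eq_iff)
qed

lemma polys_deg_le_sum:
  assumes "\<And>i. i \<in> I \<Longrightarrow> F i \<in> polys_deg_le V a"
  shows "(\<lambda>x. \<Sum>i\<in>I. F i x) \<in> polys_deg_le V a"
proof -
  have "(\<Sum>i\<in>I. F i) \<in> polys_deg_le V a"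
    using assms unfolding polys_deg_le_def by (rule fun_vs.span_sum)
  moreover have "(\<Sum>i\<in>I. F i) = (\<lambda>x. \<Sum>i\<in>I. F i x)"
    by (simp add: fun_eq_iff sum_fun_apply)
  ultimately show ?thesis
    by (simp only:)
qed

lemma polys_deg_le_power:
  "f \<in> polys_deg_le V a \<Longrightarrow> (\<lambda>x. f x ^ j) \<in> polys_deg_le V (j * a)"
proof (induction j)
  case 0
  then show ?case
    using polys_deg_le_const by simp
next
  case (Suc j)
  then show ?case
    using polys_deg_le_mult[OF Suc.prems Suc.IH[OF Suc.prems]] by simp
qed

lemma polys_deg_le_prod:
  "finite I \<Longrightarrow> (\<And>i. i \<in> I \<Longrightarrow> F i \<in> polys_deg_le V a)
    \<Longrightarrow> (\<lambda>x. \<Prod>i\<in>I. F i x) \<in> polys_deg_le V (card I * a)"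
proof (induction I rule: finite_induct)
  case empty
  then show ?case
    using polys_deg_le_const by simp
next
  case (insert i I)
  then show ?case
    using polys_deg_le_mult[of "F i" V a "\<lambda>x. \<Prod>i\<in>I. F i x" "card I * a"] by simp
qed

lemma monomial_comp_in_polys_deg_le:
  assumes "finite V" "\<alpha> \<in> V \<rightarrow>\<^sub>E {..k}" "\<And>v. v \<in> V \<Longrightarrow> (\<lambda>x. F x v) \<in> polys_deg_le W a"
  shows "(\<lambda>x. monomial V \<alpha> (F x)) \<in> polys_deg_le W (card V * (k * a))"
  unfolding monomial_def
proof (intro polys_deg_le_prod assms(1))
  fix v
  assume "v \<in> V"
  then have "(\<lambda>x. F x v ^ \<alpha> v) \<in> polys_deg_le W (\<alpha> v * a)"
    by (intro polys_deg_le_power assms(3))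
  moreover have "\<alpha> v * a \<le> k * a"
    using assms(2) \<open>v \<in> V\<close> by auto
  ultimately show "(\<lambda>x. F x v ^ \<alpha> v) \<in> polys_deg_le W (k * a)"
    using polys_deg_le_mono by blast
qed

text \<open>Monomials in \<open>x\<close> supported on a single slice \<open>fst z = s\<close>; with them one dimension count
  covers all of the finitely many partial transpose patterns \<open>s\<close> at once.\<close>

definition switched_monomials :: "'v set \<Rightarrow> nat \<Rightarrow> 's set \<Rightarrow> ('s \<times> ('v \<Rightarrow> 'a::field) \<Rightarrow> 'a) set" where
  "switched_monomials V e S =
     (\<lambda>(s, \<alpha>) z. if fst z = s then monomial V \<alpha> (snd z) else 0) ` (S \<times> (V \<rightarrow>\<^sub>E {..e}))"

lemma finite_switched_monomials: "finite V \<Longrightarrow> finite S \<Longrightarrow> finite (switched_monomials V e S)"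
  by (simp add: switched_monomials_def finite_PiE)

lemma card_switched_monomials:
  "finite V \<Longrightarrow> finite S \<Longrightarrow> card (switched_monomials V e S) \<le> card S * (e + 1) ^ card V"
  unfolding switched_monomials_def
  by (rule order_trans[OF card_image_le]) (simp_all add: finite_PiE card_cartesian_product card_PiE)

lemma switch_in_span_switched_monomials:
  assumes "f \<in> polys_deg_le V e" "s \<in> S"
  shows "(\<lambda>z. if fst z = s then f (snd z) else 0) \<in> fun_vs.span (switched_monomials V e S)"
proof (rule fun_span_map[OF assms(1)[unfolded polys_deg_le_def],
      where L="\<lambda>f z. if fst z = s then f (snd z) else 0"])
  show "(\<lambda>z. if fst z = s then 0 (snd z) else 0) = 0"
    by (simp add: fun_eq_iff)
  show "(\<lambda>z. if fst z = s then (fun_scale c g + h) (snd z) else 0) =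
      fun_scale c (\<lambda>z. if fst z = s then g (snd z) else 0) + (\<lambda>z. if fst z = s then h (snd z) else 0)"
    for c g h
    by (simp add: fun_eq_iff fun_scale_def)
  show "(\<lambda>z. if fst z = s then b (snd z) else 0) \<in> fun_vs.span (switched_monomials V e S)"
    if "b \<in> monomial V ` (V \<rightarrow>\<^sub>E {..e})" for b
    using that assms(2) unfolding switched_monomials_def by (auto intro!: fun_vs.span_base)
qed

lemma switch_family_in_span_switched_monomials:
  assumes "finite S" "\<And>s. s \<in> S \<Longrightarrow> F s \<in> polys_deg_le V e"
  shows "(\<lambda>z. if fst z \<in> S then F (fst z) (snd z) else 0) \<in> fun_vs.span (switched_monomials V e S)"
proof -
  have "(\<Sum>s\<in>S. (\<lambda>z. if fst z = s then F s (snd z) else 0)) \<in> fun_vs.span (switched_monomials V e S)"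
    by (intro fun_vs.span_sum switch_in_span_switched_monomials assms(2))
  moreover have "(\<Sum>s\<in>S. (\<lambda>z. if fst z = s then F s (snd z) else 0)) =
      (\<lambda>z. if fst z \<in> S then F (fst z) (snd z) else 0)"
    using assms(1) by (simp add: fun_eq_iff sum_fun_apply if_distrib[of "\<lambda>s. F s _"] sum.delta
        cong: if_cong)
  ultimately show ?thesis
    by (simp only:)
qed

lemma power_sum_eq_0_imp_coeff_eq_0:
  fixes a :: "nat \<Rightarrow> 'a::field"
  assumes "infinite (UNIV :: 'a set)" "\<And>t. (\<Sum>i\<le>k. a i * t ^ i) = 0" "j \<le> k"
  shows "a j = 0"
proof -
  define p where "p = (\<Sum>i\<le>k. monom (a i) i)"
  have "poly p t = 0" for t
    using assms(2) by (simp add: p_def poly_sum poly_monom)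
  then have "{t. poly p t = 0} = UNIV"
    by blast
  then have "p = 0"
    using poly_roots_finite[of p] assms(1) by auto
  moreover have "coeff p j = a j"
    using assms(3) by (simp add: p_def coeff_sum coeff_monom)
  ultimately show ?thesis
    by simp
qed

lemma monomial_sum_insert:
  fixes c :: "('v \<Rightarrow> nat) \<Rightarrow> 'a::comm_semiring_1"
  assumes "finite V" "a \<notin> V"
  shows "(\<Sum>\<alpha>\<in>insert a V \<rightarrow>\<^sub>E {..k}. c \<alpha> * monomial (insert a V) \<alpha> y) =
    (\<Sum>i\<le>k. (\<Sum>\<beta>\<in>V \<rightarrow>\<^sub>E {..k}. c (\<beta>(a := i)) * monomial V \<beta> y) * y a ^ i)"
proof -
  have "monomial (insert a V) (\<beta>(a := i)) y = y a ^ i * monomial V \<beta> y" for \<beta> i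
  proof -
    have "monomial V (\<beta>(a := i)) y = monomial V \<beta> y"
      using assms(2) by (auto simp: monomial_def intro!: prod.cong)
    then show ?thesis
      using assms by (simp add: monomial_def)
  qed
  note monomial_upd = this
  have "(\<Sum>\<alpha>\<in>insert a V \<rightarrow>\<^sub>E {..k}. c \<alpha> * monomial (insert a V) \<alpha> y) =
      (\<Sum>\<alpha>\<in>(\<lambda>(i, \<beta>). \<beta>(a := i)) ` ({..k} \<times> (V \<rightarrow>\<^sub>E {..k})). c \<alpha> * monomial (insert a V) \<alpha> y)"
    by (simp only: PiE_insert_eq)
  also have "\<dots> = (\<Sum>(i, \<beta>)\<in>{..k} \<times> (V \<rightarrow>\<^sub>E {..k}). c (\<beta>(a := i)) * monomial V \<beta> y * y a ^ i)"
    by (subst sum.reindex[OF inj_combinator[OF assms(2)]])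
      (simp add: case_prod_unfold monomial_upd algebra_simps)
  also have "\<dots> = (\<Sum>i\<le>k. (\<Sum>\<beta>\<in>V \<rightarrow>\<^sub>E {..k}. c (\<beta>(a := i)) * monomial V \<beta> y) * y a ^ i)"
    by (simp add: sum.cartesian_product[symmetric] sum_distrib_right)
  finally show ?thesis .
qed

lemma monomial_sum_eq_0_imp_coeff_eq_0:
  fixes c :: "('v \<Rightarrow> nat) \<Rightarrow> 'a::field"
  assumes "infinite (UNIV :: 'a set)" "finite V"
    and "\<And>y. (\<Sum>\<alpha>\<in>V \<rightarrow>\<^sub>E {..k}. c \<alpha> * monomial V \<alpha> y) = 0" "\<alpha> \<in> V \<rightarrow>\<^sub>E {..k}"
  shows "c \<alpha> = 0"
  using assms(2-4)
proof (induction V arbitrary: c \<alpha> rule: finite_induct)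
  case empty
  then show ?case
    by (simp add: monomial_def)
next
  case (insert a V)
  have "c (\<beta>(a := j)) = 0" if "\<beta> \<in> V \<rightarrow>\<^sub>E {..k}" "j \<le> k" for \<beta> j
  proof (rule insert.IH[OF _ that(1)])
    fix y
    have "(\<Sum>i\<le>k. (\<Sum>\<beta>\<in>V \<rightarrow>\<^sub>E {..k}. c (\<beta>(a := i)) * monomial V \<beta> y) * t ^ i) = 0" for t
    proof -
      have "monomial V \<beta> (y(a := t)) = monomial V \<beta> y" for \<beta>
        using insert.hyps(2) by (auto intro: monomial_cong)
      moreover have "(\<Sum>\<alpha>\<in>insert a V \<rightarrow>\<^sub>E {..k}. c \<alpha> * monomial (insert a V) \<alpha> (y(a := t))) = 0"
        by (rule insert.prems(1))
      ultimately show ?thesis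
        unfolding monomial_sum_insert[OF insert.hyps] fun_upd_same by simp
    qed
    then show "(\<Sum>\<beta>\<in>V \<rightarrow>\<^sub>E {..k}. c (\<beta>(a := j)) * monomial V \<beta> y) = 0"
      by (rule power_sum_eq_0_imp_coeff_eq_0[OF assms(1) _ that(2)])
  qed
  moreover have "\<alpha> = (\<alpha>(a := undefined))(a := \<alpha> a)" "\<alpha>(a := undefined) \<in> V \<rightarrow>\<^sub>E {..k}" "\<alpha> a \<le> k"
    using insert.prems(2) insert.hyps(2) by (auto simp: PiE_def Pi_def extensional_def)
  ultimately show ?case
    by metis
qed

lemma poly_fun_sum: "(\<And>i. i \<in> I \<Longrightarrow> F i \<in> poly_fun) \<Longrightarrow> (\<lambda>M. \<Sum>i\<in>I. F i M) \<in> poly_fun"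
  by (induction I rule: infinite_finite_induct) (auto intro: pf_const pf_add)

lemma poly_fun_prod: "(\<And>i. i \<in> I \<Longrightarrow> F i \<in> poly_fun) \<Longrightarrow> (\<lambda>M. \<Prod>i\<in>I. F i M) \<in> poly_fun"
  by (induction I rule: infinite_finite_induct) (auto intro: pf_const pf_mult)

lemma poly_fun_power: "p \<in> poly_fun \<Longrightarrow> (\<lambda>M. p M ^ j) \<in> poly_fun"
  by (induction j) (auto intro: pf_const pf_mult)

lemma poly_fun_monomial: "(\<lambda>M. monomial V \<alpha> (case_prod M)) \<in> poly_fun"
  unfolding monomial_def case_prod_unfold by (intro poly_fun_prod poly_fun_power pf_var)

section \<open>Infinite fields\<close>

lemma pt_param_in_polys_deg_le:
  "(\<lambda>x. pt_param R n d \<sigma> x i j) \<in> polys_deg_le (pt_vars R n d) 2"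
proof (cases "i \<in> idx n d \<and> j \<in> idx n d")
  case True
  have "(\<lambda>x. x (t, True, swap_idx (\<sigma> t) i j) * x (t, False, swap_idx (\<sigma> t) j i))
      \<in> polys_deg_le (pt_vars R n d) (1 + 1)" if "t < R" for t
    using that True swap_idx_in_idx[of i n d j] swap_idx_in_idx[of j n d i]
    by (intro polys_deg_le_mult polys_deg_le_var finite_pt_vars) (auto simp: pt_vars_def)
  then have "(\<lambda>x. \<Sum>t<R. x (t, True, swap_idx (\<sigma> t) i j) * x (t, False, swap_idx (\<sigma> t) j i))
      \<in> polys_deg_le (pt_vars R n d) (1 + 1)"
    by (intro polys_deg_le_sum) simp
  then show ?thesis
    using True by (simp add: pt_param_def numeral_2_eq_2)
next
  case False
  then show ?thesis
    using subsetD[OF polys_deg_le_mono[of 0 2] polys_deg_le_const] by (auto simp: pt_param_def)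
qed

lemma switched_count_less:
  fixes T D m :: nat
  assumes "m < D"
  shows "T * (D * (T * (2 * D) ^ m * 2) + 1) ^ m < (T * (2 * D) ^ m + 1) ^ D"
proof -
  define K where "K = T * (2 * D) ^ m + 1"
  have "D * (T * (2 * D) ^ m * 2) + 1 \<le> 2 * D * K"
    using assms by (simp add: K_def algebra_simps)
  then have "T * (D * (T * (2 * D) ^ m * 2) + 1) ^ m \<le> T * (2 * D * K) ^ m"
    by (intro mult_left_mono power_mono) auto
  also have "\<dots> = T * (2 * D) ^ m * K ^ m"
    by (metis mult.assoc power_mult_distrib)
  also have "\<dots> < K * K ^ m"
    by (intro mult_strict_right_mono) (auto simp: K_def)
  also have "\<dots> = K ^ (m + 1)"
    by simp
  also have "\<dots> \<le> K ^ D"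
    using assms by (intro power_increasing) (auto simp: K_def)
  finally show ?thesis
    by (simp add: K_def)
qed

lemma switched_pt_param_monomial_in_span:
  assumes "\<alpha> \<in> sorted_pairs n d \<rightarrow>\<^sub>E {..k}"
  shows "(\<lambda>z. if fst z \<in> pt_patterns R d then
      monomial (sorted_pairs n d) \<alpha> (case_prod (pt_param R n d (fst z) (snd z))) else 0)
    \<in> fun_vs.span (switched_monomials (pt_vars R n d) (card (sorted_pairs n d) * (k * 2)) (pt_patterns R d))"
proof (intro switch_family_in_span_switched_monomials finite_pt_patterns)
  show "(\<lambda>x. monomial (sorted_pairs n d) \<alpha> (case_prod (pt_param R n d \<sigma> x)))
      \<in> polys_deg_le (pt_vars R n d) (card (sorted_pairs n d) * (k * 2))" for \<sigma>
    using assms by (intro monomial_comp_in_polys_deg_le finite_sorted_pairs)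
      (auto simp: case_prod_unfold pt_param_in_polys_deg_le)
qed

lemma sorted_monomials_dependent_on_pt_param:
  assumes "card (pt_vars R n d) < card (sorted_pairs n d)"
  obtains k and c :: "(nat list \<times> nat list \<Rightarrow> nat) \<Rightarrow> 'a::field"
  where "\<exists>\<alpha>\<in>sorted_pairs n d \<rightarrow>\<^sub>E {..k}. c \<alpha> \<noteq> 0"
    and "\<And>\<sigma> x. \<sigma> \<in> pt_patterns R d \<Longrightarrow>
      (\<Sum>\<alpha>\<in>sorted_pairs n d \<rightarrow>\<^sub>E {..k}. c \<alpha> * monomial (sorted_pairs n d) \<alpha> (case_prod (pt_param R n d \<sigma> x))) = 0"
proof -
  define D where "D = card (sorted_pairs n d)"
  define m where "m = card (pt_vars R n d)"
  define T where "T = card (pt_patterns R d)"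
  \<comment> \<open>\<open>k\<close> makes the \<open>(k + 1) ^ D\<close> monomials in the free entries outnumber the switched
    monomials of degree \<open>D * (k * 2)\<close> in the \<open>m < D\<close> parameters.\<close>
  define k where "k = T * (2 * D) ^ m"
  define A where "A = sorted_pairs n d \<rightarrow>\<^sub>E {..k}"
  define H :: "((nat \<Rightarrow> nat set) \<times> (nat \<times> bool \<times> nat list \<Rightarrow> 'a) \<Rightarrow> 'a) set"
    where "H = switched_monomials (pt_vars R n d) (D * (k * 2)) (pt_patterns R d)"
  define g :: "_ \<Rightarrow> _ \<Rightarrow> 'a" where "g \<alpha> z = (if fst z \<in> pt_patterns R d then
      monomial (sorted_pairs n d) \<alpha> (case_prod (pt_param R n d (fst z) (snd z))) else 0)" for \<alpha> z
  have "g \<alpha> \<in> fun_vs.span H" if "\<alpha> \<in> A" for \<alpha>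
    using that unfolding g_def H_def A_def D_def by (rule switched_pt_param_monomial_in_span)
  moreover have "card H < card A"
  proof -
    have "card H \<le> T * (D * (k * 2) + 1) ^ m"
      unfolding H_def T_def m_def by (intro card_switched_monomials finite_pt_vars finite_pt_patterns)
    also have "\<dots> < (k + 1) ^ D"
      unfolding k_def by (rule switched_count_less) (use assms in \<open>simp add: m_def D_def\<close>)
    also have "\<dots> = card A"
      by (simp add: A_def D_def card_PiE finite_sorted_pairs)
    finally show ?thesis .
  qed
  moreover have "finite H" "finite A"
    by (simp_all add: H_def A_def finite_switched_monomials finite_pt_vars finite_pt_patterns
        finite_PiE finite_sorted_pairs)
  ultimately obtain c where c_nonzero: "\<exists>\<alpha>\<in>A. c \<alpha> \<noteq> 0"
    and c_relation: "\<And>z. (\<Sum>\<alpha>\<in>A. c \<alpha> * g \<alpha> z) = 0"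
    using fun_span_card_less_imp_dependent[of H A g] by blast
  show thesis
  proof (rule that[of k c])
    show "\<exists>\<alpha>\<in>sorted_pairs n d \<rightarrow>\<^sub>E {..k}. c \<alpha> \<noteq> 0"
      using c_nonzero by (simp only: A_def)
    show "(\<Sum>\<alpha>\<in>sorted_pairs n d \<rightarrow>\<^sub>E {..k}. c \<alpha> * monomial (sorted_pairs n d) \<alpha>
        (case_prod (pt_param R n d \<sigma> x))) = 0" if "\<sigma> \<in> pt_patterns R d" for \<sigma> x
      using c_relation[of "(\<sigma>, x)"] that by (simp add: A_def g_def)
  qed
qed

lemma ex_poly_fun_vanishing_on_PT_rank_le:
  assumes "infinite (UNIV :: 'a::field set)" "card (pt_vars R n d) < card (sorted_pairs n d)"
  shows "\<exists>p \<in> poly_fun. (\<forall>M :: nat list \<Rightarrow> nat list \<Rightarrow> 'a. is_mat n d M \<and> PT_rank n d M \<le> R \<longrightarrow> p M = 0)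
    \<and> (\<exists>M \<in> FS n d. p M \<noteq> 0)"
proof -
  obtain k and c :: "_ \<Rightarrow> 'a"
    where c_nonzero: "\<exists>\<alpha>\<in>sorted_pairs n d \<rightarrow>\<^sub>E {..k}. c \<alpha> \<noteq> 0"
    and c_relation: "\<And>\<sigma> x. \<sigma> \<in> pt_patterns R d \<Longrightarrow> (\<Sum>\<alpha>\<in>sorted_pairs n d \<rightarrow>\<^sub>E {..k}.
        c \<alpha> * monomial (sorted_pairs n d) \<alpha> (case_prod (pt_param R n d \<sigma> x))) = 0"
    by (rule sorted_monomials_dependent_on_pt_param[OF assms(2)]) blast+
  define p where "p M = (\<Sum>\<alpha>\<in>sorted_pairs n d \<rightarrow>\<^sub>E {..k}. c \<alpha> * monomial (sorted_pairs n d) \<alpha> (case_prod M))"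
    for M :: "nat list \<Rightarrow> nat list \<Rightarrow> 'a"
  have "p \<in> poly_fun"
    unfolding p_def by (intro poly_fun_sum pf_mult pf_const poly_fun_monomial)
  moreover have "p M = 0" if M: "is_mat n d M" "PT_rank n d M \<le> R" for M
  proof -
    obtain \<sigma> x where "\<sigma> \<in> pt_patterns R d" "M = pt_param R n d \<sigma> x"
      using PT_rank_le_imp_pt_param[OF M] by blast
    then show ?thesis
      unfolding p_def by (simp add: c_relation)
  qed
  moreover have "\<exists>M \<in> FS n d. p M \<noteq> 0"
  proof -
    obtain y where y: "(\<Sum>\<alpha>\<in>sorted_pairs n d \<rightarrow>\<^sub>E {..k}. c \<alpha> * monomial (sorted_pairs n d) \<alpha> y) \<noteq> 0"
      using monomial_sum_eq_0_imp_coeff_eq_0[OF assms(1) finite_sorted_pairs] c_nonzero by blast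
    have "monomial (sorted_pairs n d) \<alpha> (case_prod (fs_extend n d y)) = monomial (sorted_pairs n d) \<alpha> y"
      for \<alpha>
      by (rule monomial_cong) (auto simp: fs_extend_sorted_pair)
    then have "p (fs_extend n d y) \<noteq> 0"
      using y by (simp add: p_def)
    then show ?thesis
      using fs_extend_in_FS by blast
  qed
  ultimately show ?thesis
    by blast
qed

lemma ex_poly_fun_vanishing_on_low_PT_rank:
  fixes \<epsilon> :: real
  assumes "\<epsilon> > 0" "infinite (UNIV :: 'a::field set)"
  shows "\<exists>p \<in> poly_fun.
    (\<forall>M :: nat list \<Rightarrow> nat list \<Rightarrow> 'a. M \<in> FS n d \<and>
       real (PT_rank n d M) < (1 / 2 ^ (d + 1) - \<epsilon>) * real n ^ d \<longrightarrow> p M = 0)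
    \<and> (\<exists>M \<in> FS n d. p M \<noteq> 0)"
proof (cases "\<exists>M :: nat list \<Rightarrow> nat list \<Rightarrow> 'a. M \<in> FS n d \<and>
    real (PT_rank n d M) < (1 / 2 ^ (d + 1) - \<epsilon>) * real n ^ d")
  case False
  have "(\<lambda>M. 1 :: 'a) \<in> poly_fun"
    by (rule pf_const)
  moreover have "\<exists>M \<in> FS n d. (1 :: 'a) \<noteq> 0"
    using fs_extend_in_FS[of n d] by auto
  ultimately show ?thesis
    using False by (intro bexI[of _ "\<lambda>M. 1"]) auto
next
  case True
  then obtain R where R: "real R < (1 / 2 ^ (d + 1) - \<epsilon>) * real n ^ d"
    and R_greatest: "\<And>r. real r < (1 / 2 ^ (d + 1) - \<epsilon>) * real n ^ d \<Longrightarrow> r \<le> R"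
    by (auto elim: ex_greatest_nat_less)
  have "card (pt_vars R n d) < card (sorted_pairs n d)"
    by (rule card_pt_vars_less_card_sorted_pairs[OF assms(1) R])
  then obtain p where "p \<in> poly_fun" "\<exists>M \<in> FS n d. p M \<noteq> 0"
    and "\<And>M :: nat list \<Rightarrow> nat list \<Rightarrow> 'a. is_mat n d M \<Longrightarrow> PT_rank n d M \<le> R \<Longrightarrow> p M = 0"
    using ex_poly_fun_vanishing_on_PT_rank_le[OF assms(2)] by blast
  then show ?thesis
    using R_greatest by (auto simp: FS_def fully_symmetric_def)
qed

theorem proposition3p18:
  fixes \<epsilon> :: real and d :: nat
  assumes "\<epsilon> > 0" and "d \<ge> 1"
  shows "(finite (UNIV :: 'a::field set) \<longrightarrow>
           (\<lambda>n. real (card {M :: nat list \<Rightarrow> nat list \<Rightarrow> 'a. M \<in> FS n d \<and>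
                     real (PT_rank n d M) < (1 / 2 ^ (d + 1) - \<epsilon>) * real n ^ d})
                 / real (card (FS n d :: (nat list \<Rightarrow> nat list \<Rightarrow> 'a) set)))
           \<longlonglongrightarrow> 0)
       \<and> (infinite (UNIV :: 'a set) \<longrightarrow>
           (\<exists>N. \<forall>n\<ge>N. \<exists>p \<in> poly_fun.
              (\<forall>M :: nat list \<Rightarrow> nat list \<Rightarrow> 'a. M \<in> FS n d \<and>
                  real (PT_rank n d M) < (1 / 2 ^ (d + 1) - \<epsilon>) * real n ^ d \<longrightarrow> p M = 0)
              \<and> (\<exists>M \<in> FS n d. p M \<noteq> 0)))"
  by (intro conjI impI exI[of _ 0] allI low_PT_rank_fraction_tendsto_0[OF assms]
      ex_poly_fun_vanishing_on_low_PT_rank[OF assms(1)])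

end
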